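(* Let $\mathbb F$ be a field and $\gamma$ a permutation of $\mathbb F$ fixing both $0$ and $1$. Suppose that $\gamma$ normalizes both the groups $\Gamma(\mathbb F^\times)$ and $s\Gamma(\mathbb F^\times)s$, where $s$ is the permutation $x\mapsto -x+1$. Then $\gamma\in\mathrm{Aut}(\mathbb F)$.
   Context: $\Gamma(\mathbb F^\times)$ denotes the group of permutations of $\mathbb F$ of the form $x\mapsto ax$ with $a\in\mathbb F^\times$. $\mathrm{Aut}(\mathbb F)$ is the group of field automorphisms. *)

theory Defs
  imports Main
begin

definition Gamma_mult :: "('a::field \<Rightarrow> 'a) set" where
  "Gamma_mult = {(\<lambda>x. a * x) | a. a \<noteq> 0}"

definition s_perm :: "'a::field \<Rightarrow> 'a" where
  "s_perm x = - x + 1"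

definition s_Gamma_s :: "('a::field \<Rightarrow> 'a) set" where
  "s_Gamma_s = (\<lambda>g. s_perm \<circ> g \<circ> s_perm) ` Gamma_mult"

definition normalizes :: "('a \<Rightarrow> 'a) \<Rightarrow> ('a \<Rightarrow> 'a) set \<Rightarrow> bool" where
  "normalizes \<gamma> G \<longleftrightarrow> (\<lambda>g. \<gamma> \<circ> g \<circ> inv \<gamma>) ` G = G"

definition field_aut :: "('a::field \<Rightarrow> 'a) \<Rightarrow> bool" where
  "field_aut \<sigma> \<longleftrightarrow> bij \<sigma> \<and> (\<forall>x y. \<sigma> (x + y) = \<sigma> x + \<sigma> y) \<and> (\<forall>x y. \<sigma> (x * y) = \<sigma> x * \<sigma> y)"

end

theory Submission
  imports Defs
begin

text \<open>Conjugating \<open>x \<mapsto> a x\<close> by \<open>\<gamma>\<close> gives some \<open>x \<mapsto> b x\<close>, and evaluating at \<open>1\<close> shows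
  \<open>b = \<gamma> a\<close>; hence \<open>\<gamma>\<close> is multiplicative. Since \<open>s\<close> is an involution, the second hypothesis
  says the same of \<open>s \<gamma> s\<close>, i.e. \<open>1 - \<gamma> (1 - a u) = (1 - \<gamma> (1 - a)) (1 - \<gamma> (1 - u))\<close>.
  Taking \<open>u = 1/a\<close> and rewriting \<open>\<gamma> (1 - 1/a) = - \<gamma> (1 - a) / \<gamma> a\<close> by multiplicativity yields
  \<open>\<gamma> a + \<gamma> (1 - a) = 1\<close>. Together with \<open>\<gamma> (- x) = - \<gamma> x\<close> this gives \<open>\<gamma> (1 + z) = 1 + \<gamma> z\<close>,
  and additivity follows by scaling: \<open>\<gamma> (x + y) = \<gamma> y * \<gamma> (1 + x / y)\<close>.\<close>

lemma normalizes_conj_mem: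
  assumes "normalizes \<gamma> G" and "g \<in> G"
  shows "\<gamma> \<circ> g \<circ> inv \<gamma> \<in> G"
  using assms unfolding normalizes_def by blast

lemma mult_if_conj_preserves_Gamma_mult:
  fixes \<gamma> :: "'a::field \<Rightarrow> 'a"
  assumes "inj \<gamma>" and "\<gamma> 0 = 0" and "\<gamma> 1 = 1"
    and conj: "\<And>g. g \<in> Gamma_mult \<Longrightarrow> \<gamma> \<circ> g \<circ> inv \<gamma> \<in> Gamma_mult"
  shows "\<gamma> (a * x) = \<gamma> a * \<gamma> x"
proof (cases "a = 0")
  case True
  then show ?thesis using \<open>\<gamma> 0 = 0\<close> by simp
next
  case False
  then have "(\<lambda>x. a * x) \<in> Gamma_mult" unfolding Gamma_mult_def by blast
  then obtain b where b: "\<gamma> \<circ> (\<lambda>x. a * x) \<circ> inv \<gamma> = (\<lambda>x. b * x)"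
    using conj unfolding Gamma_mult_def by blast
  have inv_\<gamma>: "inv \<gamma> (\<gamma> y) = y" for y using \<open>inj \<gamma>\<close> by simp
  have conj_at: "\<gamma> (a * inv \<gamma> y) = b * y" for y using fun_cong[OF b, of y] by simp
  have "b = \<gamma> a" using conj_at[of 1] inv_\<gamma>[of 1] \<open>\<gamma> 1 = 1\<close> by simp
  then show ?thesis using conj_at[of "\<gamma> x"] inv_\<gamma> by simp
qed

lemma s_perm_s_perm [simp]: "s_perm (s_perm x) = x"
  by (simp add: s_perm_def)

lemma inj_s_perm: "inj s_perm"
  by (rule injI) (metis s_perm_s_perm)

lemma inv_s_perm_conj:
  assumes "bij \<gamma>"
  shows "inv (s_perm \<circ> \<gamma> \<circ> s_perm) = s_perm \<circ> inv \<gamma> \<circ> s_perm"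
proof (rule inv_equality)
  show "(s_perm \<circ> inv \<gamma> \<circ> s_perm) ((s_perm \<circ> \<gamma> \<circ> s_perm) x) = x" for x
    using assms by (simp add: bij_is_inj)
  show "(s_perm \<circ> \<gamma> \<circ> s_perm) ((s_perm \<circ> inv \<gamma> \<circ> s_perm) y) = y" for y
    using assms by (simp add: bij_is_surj surj_f_inv_f)
qed

lemma s_conj_preserves_Gamma_mult:
  assumes "bij \<gamma>" and "normalizes \<gamma> s_Gamma_s" and "g \<in> Gamma_mult"
  shows "(s_perm \<circ> \<gamma> \<circ> s_perm) \<circ> g \<circ> inv (s_perm \<circ> \<gamma> \<circ> s_perm) \<in> Gamma_mult"
proof -
  have "\<gamma> \<circ> (s_perm \<circ> g \<circ> s_perm) \<circ> inv \<gamma> \<in> s_Gamma_s"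
    using assms(2,3) normalizes_conj_mem unfolding s_Gamma_s_def by blast
  then obtain h where h: "h \<in> Gamma_mult"
    and h_eq: "\<gamma> \<circ> (s_perm \<circ> g \<circ> s_perm) \<circ> inv \<gamma> = s_perm \<circ> h \<circ> s_perm"
    unfolding s_Gamma_s_def by blast
  have "(s_perm \<circ> \<gamma> \<circ> s_perm) \<circ> g \<circ> inv (s_perm \<circ> \<gamma> \<circ> s_perm)
      = s_perm \<circ> (\<gamma> \<circ> (s_perm \<circ> g \<circ> s_perm) \<circ> inv \<gamma>) \<circ> s_perm"
    unfolding inv_s_perm_conj[OF assms(1)] by (simp add: comp_assoc)
  also have "\<dots> = h" by (simp add: h_eq fun_eq_iff)
  finally show ?thesis using h by simp
qed

lemma mult_minus:
  fixes \<gamma> :: "'a::field \<Rightarrow> 'a"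
  assumes "inj \<gamma>" and "\<gamma> 1 = 1" and mult: "\<And>a x. \<gamma> (a * x) = \<gamma> a * \<gamma> x"
  shows "\<gamma> (- x) = - \<gamma> x"
proof -
  have "\<gamma> (-1) * \<gamma> (-1) = 1" using mult[of "-1" "-1"] \<open>\<gamma> 1 = 1\<close> by simp
  then have "\<gamma> (-1) = 1 \<or> \<gamma> (-1) = -1"
    by (metis square_eq_1_iff power2_eq_square)
  moreover have "\<gamma> (-1) = 1 \<Longrightarrow> -1 = (1::'a)"
    using \<open>inj \<gamma>\<close> \<open>\<gamma> 1 = 1\<close> by (metis injD)
  ultimately have "\<gamma> (-1) = -1" by force
  then show ?thesis using mult[of "-1" x] by simp
qed

lemma commutes_with_s_perm_if_mult:
  fixes \<gamma> :: "'a::field \<Rightarrow> 'a"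
  assumes "inj \<gamma>" and "\<gamma> 0 = 0" and "\<gamma> 1 = 1"
    and mult: "\<And>a x. \<gamma> (a * x) = \<gamma> a * \<gamma> x"
    and s_mult: "\<And>a u. 1 - \<gamma> (1 - a * u) = (1 - \<gamma> (1 - a)) * (1 - \<gamma> (1 - u))"
  shows "\<gamma> x + \<gamma> (1 - x) = 1"
proof (cases "x = 0 \<or> x = 1")
  case True
  then show ?thesis using \<open>\<gamma> 0 = 0\<close> \<open>\<gamma> 1 = 1\<close> by auto
next
  case False
  define A where "A = \<gamma> x"
  define B where "B = \<gamma> (1 - x)"
  have nonzero: "\<gamma> y \<noteq> 0" if "y \<noteq> 0" for y
    using \<open>inj \<gamma>\<close> \<open>\<gamma> 0 = 0\<close> that by (metis injD)
  have "A \<noteq> 0" "B \<noteq> 0" using nonzero False unfolding A_def B_def by auto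
  have "\<gamma> (inverse x) = inverse A"
    using mult[of x "inverse x"] False \<open>\<gamma> 1 = 1\<close> \<open>A \<noteq> 0\<close>
    by (simp add: A_def field_simps)
  moreover have "\<gamma> (x - 1) = - B"
    using mult_minus[OF \<open>inj \<gamma>\<close> \<open>\<gamma> 1 = 1\<close> mult, of "1 - x"] by (simp add: B_def)
  moreover have "1 - inverse x = (x - 1) * inverse x"
    using False by (simp add: field_simps)
  ultimately have "\<gamma> (1 - inverse x) = - B / A"
    by (simp only: mult divide_inverse mult_minus_left)
  then have "1 = (1 - B) * (1 + B / A)"
    using s_mult[of x "inverse x"] False \<open>\<gamma> 0 = 0\<close> by (simp add: B_def)
  then have "A = (1 - B) * (A + B)" using \<open>A \<noteq> 0\<close> by (simp add: field_simps)
  then have "B * (1 - A - B) = 0" by (simp add: algebra_simps)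
  then have "1 - A - B = 0" using \<open>B \<noteq> 0\<close> by simp
  then have "A + B = 1" by (simp add: algebra_simps)
  then show ?thesis by (simp add: A_def B_def)
qed

lemma add_if_mult_and_commutes_with_s_perm:
  fixes \<gamma> :: "'a::field \<Rightarrow> 'a"
  assumes "inj \<gamma>" and "\<gamma> 0 = 0" and "\<gamma> 1 = 1"
    and mult: "\<And>a x. \<gamma> (a * x) = \<gamma> a * \<gamma> x"
    and s_comm: "\<And>x. \<gamma> x + \<gamma> (1 - x) = 1"
  shows "\<gamma> (x + y) = \<gamma> x + \<gamma> y"
proof (cases "y = 0")
  case True
  then show ?thesis using \<open>\<gamma> 0 = 0\<close> by simp
next
  case False
  have shift: "\<gamma> (1 + z) = 1 + \<gamma> z" for z
    using s_comm[of "- z"] mult_minus[OF \<open>inj \<gamma>\<close> \<open>\<gamma> 1 = 1\<close> mult, of z]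
    by (simp add: algebra_simps)
  have "x + y = y * (1 + x / y)" using False by (simp add: field_simps)
  then have "\<gamma> (x + y) = \<gamma> y * (1 + \<gamma> (x / y))" by (simp only: mult shift)
  also have "\<dots> = \<gamma> y + \<gamma> x" using mult[of y "x / y"] False by (simp add: distrib_left)
  finally show ?thesis by simp
qed

theorem corollary2p2:
  fixes \<gamma> :: "'a::field \<Rightarrow> 'a"
  assumes "bij \<gamma>" and "\<gamma> 0 = 0" and "\<gamma> 1 = 1"
    and "normalizes \<gamma> Gamma_mult" and "normalizes \<gamma> s_Gamma_s"
  shows "field_aut \<gamma>"
proof -
  have "inj \<gamma>" using \<open>bij \<gamma>\<close> by (rule bij_is_inj)
  have mult: "\<gamma> (a * x) = \<gamma> a * \<gamma> x" for a x
    using mult_if_conj_preserves_Gamma_mult[OF \<open>inj \<gamma>\<close> \<open>\<gamma> 0 = 0\<close> \<open>\<gamma> 1 = 1\<close>]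
      normalizes_conj_mem[OF \<open>normalizes \<gamma> Gamma_mult\<close>] by blast
  have "(s_perm \<circ> \<gamma> \<circ> s_perm) (a * u) = (s_perm \<circ> \<gamma> \<circ> s_perm) a * (s_perm \<circ> \<gamma> \<circ> s_perm) u"
    for a u
  proof (rule mult_if_conj_preserves_Gamma_mult)
    show "inj (s_perm \<circ> \<gamma> \<circ> s_perm)"
      using \<open>inj \<gamma>\<close> inj_s_perm by (intro inj_compose)
    show "(s_perm \<circ> \<gamma> \<circ> s_perm) 0 = 0" "(s_perm \<circ> \<gamma> \<circ> s_perm) 1 = 1"
      using assms(2,3) by (simp_all add: s_perm_def)
  qed (rule s_conj_preserves_Gamma_mult[OF \<open>bij \<gamma>\<close> \<open>normalizes \<gamma> s_Gamma_s\<close>])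
  then have s_mult: "1 - \<gamma> (1 - a * u) = (1 - \<gamma> (1 - a)) * (1 - \<gamma> (1 - u))" for a u
    by (simp add: s_perm_def)
  have "\<gamma> (x + y) = \<gamma> x + \<gamma> y" for x y
    using add_if_mult_and_commutes_with_s_perm[OF \<open>inj \<gamma>\<close> \<open>\<gamma> 0 = 0\<close> \<open>\<gamma> 1 = 1\<close> mult
        commutes_with_s_perm_if_mult[OF \<open>inj \<gamma>\<close> \<open>\<gamma> 0 = 0\<close> \<open>\<gamma> 1 = 1\<close> mult s_mult]] .
  then show ?thesis unfolding field_aut_def using \<open>bij \<gamma>\<close> mult by blast
qed

end
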